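(* Let $E,A\in\mathbb{R}^{n\times n}$ with $A$ nonsingular, and let $C$ be any matrix with $n$ columns such that for all $x\in\mathbb{R}^n$, $x\in\mathcal{C}(E,A)$ if and only if $Cx=0$. A symmetric matrix $P$ is a Lyapunov matrix for $(E,A)$ if and only if there exist scalars $\kappa_1,\kappa_2\ge 0$ such that $$P+\kappa_1C^TC>0,\qquad PA^{-1}E+E^TA^{-T}P-\kappa_2C^TC<0.$$
   Context: For $E,A\in\mathbb{R}^{n\times n}$ with $A$ nonsingular, $(E,A)$ denotes the linear descriptor system $E\dot x=Ax$. Its index is the smallest integer $k^*\ge 0$ with $\mathrm{Im}((A^{-1}E)^{k^*+1})=\mathrm{Im}((A^{-1}E)^{k^*})$, and its consistency space is $\mathcal{C}(E,A)=\mathrm{Im}((A^{-1}E)^{k^*})$. If $\mathcal{C}\neq\{0\}$, $A^{-1}E$ maps $\mathcal{C}$ bijectively onto itself; with $\tilde A$ the inverse of its restriction to $\mathcal{C}$, the system on $\mathcal{C}$ is equivalent to $\dot x=\tilde A x$. A symmetric matrix $P$ is a Lyapunov matrix for $(E,A)$ if $V(x)=x^TPx$ is positive on $\mathcal{C}\setminus\{0\}$ and its derivative along solutions, $\dot V=2x^TP\tilde A x$, is negative at every nonzero $x\in\mathcal{C}$. Inequalities $M>0$ ($M<0$) for symmetric $M$ mean positive (negative) definite. *)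

theory Defs
  imports "HOL-Analysis.Analysis"
begin

definition AinvE :: "real^'n^'n \<Rightarrow> real^'n^'n \<Rightarrow> real^'n^'n" where
  "AinvE E A = matrix_inv A ** E"

definition mat_pow_image :: "real^'n^'n \<Rightarrow> nat \<Rightarrow> (real^'n) set" where
  "mat_pow_image M k = range (((*v) M) ^^ k)"

definition dae_index :: "real^'n^'n \<Rightarrow> real^'n^'n \<Rightarrow> nat" where
  "dae_index E A =
     (LEAST k. mat_pow_image (AinvE E A) (Suc k) = mat_pow_image (AinvE E A) k)"

definition consistency_space :: "real^'n^'n \<Rightarrow> real^'n^'n \<Rightarrow> (real^'n) set" where
  "consistency_space E A = mat_pow_image (AinvE E A) (dae_index E A)"

definition Atilde :: "real^'n^'n \<Rightarrow> real^'n^'n \<Rightarrow> real^'n \<Rightarrow> real^'n" where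
  "Atilde E A x = (THE y. y \<in> consistency_space E A \<and> AinvE E A *v y = x)"

definition lyapunov_matrix :: "real^'n^'n \<Rightarrow> real^'n^'n \<Rightarrow> real^'n^'n \<Rightarrow> bool" where
  "lyapunov_matrix E A P \<longleftrightarrow>
     transpose P = P \<and>
     (\<forall>x \<in> consistency_space E A. x \<noteq> 0 \<longrightarrow> 0 < x \<bullet> (P *v x)) \<and>
     (\<forall>x \<in> consistency_space E A. x \<noteq> 0 \<longrightarrow> 2 * (x \<bullet> (P *v Atilde E A x)) < 0)"

definition pos_def :: "real^'n^'n \<Rightarrow> bool" where
  "pos_def M \<longleftrightarrow> transpose M = M \<and> (\<forall>x. x \<noteq> 0 \<longrightarrow> 0 < x \<bullet> (M *v x))"

definition neg_def :: "real^'n^'n \<Rightarrow> bool" where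
  "neg_def M \<longleftrightarrow> transpose M = M \<and> (\<forall>x. x \<noteq> 0 \<longrightarrow> x \<bullet> (M *v x) < 0)"

end

theory Submission imports Defs begin

text \<open>
  The consistency space is the stable image of A^-1 E, on which A^-1 E acts bijectively; the
  substitution x = A^-1 E y turns the derivative condition 2 x^T P Atilde x < 0 into
  y^T (P A^-1 E + E^T A^-T P) y < 0 on the same space. Both Lyapunov conditions thus become
  definiteness of a quadratic form on the kernel of C, i.e. on the zero set of the positive
  semidefinite form |C x|^2. By Finsler's lemma such a condition is equivalent to definiteness
  on the whole space after adding a suitable multiple of C^T C: by homogeneity it suffices to
  work on the unit sphere, where compactness bounds the required multiple.
\<close>

lemma linear_inj_on_subspace_if_image_eq:
  fixes f :: "'a::euclidean_space \<Rightarrow> 'a"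
  assumes lf: "linear f" and "subspace S" and fS: "f ` S = S"
  shows "inj_on f S"
proof -
  obtain B where B: "B \<subseteq> S" "independent B" "S \<subseteq> span B" "card B = dim S"
    using basis_exists[of S] by blast
  have fin: "finite B" using B(2) finiteI_independent by blast
  have span_B: "span B = S" using B \<open>subspace S\<close> by (simp add: span_subspace)
  then have span_fB: "span (f ` B) = S" using fS span_linear_image[OF lf] by metis
  have card_le: "card (f ` B) \<le> dim S" using B(4) card_image_le[OF fin] by simp
  have indep: "independent (f ` B)"
    using card_le_dim_spanning[of "f ` B" S] B(1) fS span_fB card_le fin by auto
  have "dim S \<le> card (f ` B)" using dim_le_card[of S "f ` B"] span_fB fin by auto
  then have "inj_on f B" using card_le B(4) by (simp add: inj_on_iff_eq_card[OF fin])
  then show ?thesis using linear_inj_on_span_iff_independent_image[OF lf indep] span_B by simp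
qed

lemma mat_pow_image_Suc: "mat_pow_image M (Suc k) = (*v) M ` mat_pow_image M k"
  unfolding mat_pow_image_def by (simp add: image_comp)

lemma mat_pow_image_Suc_subset: "mat_pow_image M (Suc k) \<subseteq> mat_pow_image M k"
  unfolding mat_pow_image_def by (auto simp del: funpow.simps simp: funpow_Suc_right)

lemma subspace_mat_pow_image: "subspace (mat_pow_image M k)"
proof (induction k)
  case 0
  then show ?case by (simp add: mat_pow_image_def subspace_UNIV)
next
  case (Suc k)
  then show ?case
    unfolding mat_pow_image_Suc by (rule linear_subspace_image[OF matrix_vector_mul_linear])
qed

lemma mat_pow_image_stabilizes: "\<exists>k. mat_pow_image M (Suc k) = mat_pow_image M k"
proof (rule ccontr)
  assume "\<not> ?thesis"
  then have dim_less: "dim (mat_pow_image M (Suc k)) < dim (mat_pow_image M k)" for k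
    using dim_subset[OF mat_pow_image_Suc_subset]
      subspace_dim_equal[OF subspace_mat_pow_image subspace_mat_pow_image mat_pow_image_Suc_subset]
    by (metis le_neq_implies_less)
  have "dim (mat_pow_image M k) + k \<le> dim (mat_pow_image M 0)" for k
  proof (induction k)
    case (Suc k)
    then show ?case using dim_less[of k] by simp
  qed simp
  from this[of "Suc (dim (mat_pow_image M 0))"] show False by simp
qed

lemma subspace_consistency_space: "subspace (consistency_space E A)"
  unfolding consistency_space_def by (rule subspace_mat_pow_image)

lemma AinvE_image_consistency_space:
  "(*v) (AinvE E A) ` consistency_space E A = consistency_space E A"
proof -
  have "mat_pow_image (AinvE E A) (Suc (dae_index E A)) = mat_pow_image (AinvE E A) (dae_index E A)"
    unfolding dae_index_def by (rule LeastI_ex[OF mat_pow_image_stabilizes])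
  then show ?thesis unfolding consistency_space_def mat_pow_image_Suc .
qed

lemma inj_on_AinvE_consistency_space: "inj_on ((*v) (AinvE E A)) (consistency_space E A)"
  by (rule linear_inj_on_subspace_if_image_eq[OF _ subspace_consistency_space
        AinvE_image_consistency_space]) simp

lemma
  assumes "x \<in> consistency_space E A"
  shows Atilde_in_consistency_space: "Atilde E A x \<in> consistency_space E A"
    and AinvE_Atilde: "AinvE E A *v Atilde E A x = x"
proof -
  have "\<exists>!y. y \<in> consistency_space E A \<and> AinvE E A *v y = x"
    using AinvE_image_consistency_space inj_on_AinvE_consistency_space assms
    by (metis imageE inj_onD)
  then have "Atilde E A x \<in> consistency_space E A \<and> AinvE E A *v Atilde E A x = x"
    unfolding Atilde_def by (rule theI')
  then show "Atilde E A x \<in> consistency_space E A" "AinvE E A *v Atilde E A x = x" by simp_all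
qed

lemma Atilde_AinvE:
  assumes "y \<in> consistency_space E A"
  shows "Atilde E A (AinvE E A *v y) = y"
  unfolding Atilde_def using inj_on_AinvE_consistency_space assms
  by (intro the_equality) (auto dest: inj_onD)

definition qform :: "real^'n^'n \<Rightarrow> real^'n \<Rightarrow> real" where
  "qform M x = x \<bullet> (M *v x)"

lemma pos_def_iff_qform: "pos_def M \<longleftrightarrow> transpose M = M \<and> (\<forall>x. x \<noteq> 0 \<longrightarrow> 0 < qform M x)"
  unfolding pos_def_def qform_def ..

lemma neg_def_iff_qform: "neg_def M \<longleftrightarrow> transpose M = M \<and> (\<forall>x. x \<noteq> 0 \<longrightarrow> qform M x < 0)"
  unfolding neg_def_def qform_def ..

lemma qform_diff: "qform (M - N) x = qform M x - qform N x"
  by (simp add: qform_def matrix_vector_mult_diff_rdistrib inner_diff_right)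

lemma qform_uminus: "qform (- M) x = - qform M x"
  using qform_diff[of 0 M x] by (simp add: qform_def)

lemma qform_scaleR_matrix: "qform (c *\<^sub>R M) x = c * qform M x"
  by (simp add: qform_def scaleR_matrix_vector_assoc[symmetric])

lemma qform_scaleR_vector: "qform M (c *\<^sub>R x) = c\<^sup>2 * qform M x"
  by (simp add: qform_def matrix_vector_mult_scaleR power2_eq_square)

lemma continuous_on_qform: "continuous_on S (qform M)"
  unfolding qform_def by (intro continuous_intros)

lemma inner_matrix_vector_transpose:
  fixes M :: "real^'n^'m"
  shows "x \<bullet> (M *v y) = (transpose M *v x) \<bullet> y"
  by (simp add: dot_lmul_matrix)

lemma qform_transpose_mult_self: "qform (transpose C ** C) x = (C *v x) \<bullet> (C *v x)"
  unfolding qform_def matrix_vector_mul_assoc[symmetric]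
  by (simp only: inner_matrix_vector_transpose transpose_transpose)

lemma qform_symmetrized_product:
  assumes "transpose P = P"
  shows "qform (P ** N + transpose N ** P) y = 2 * ((N *v y) \<bullet> (P *v y))"
proof -
  have "qform (P ** N + transpose N ** P) y = (transpose P *v y) \<bullet> (N *v y) + (N *v y) \<bullet> (P *v y)"
    unfolding qform_def matrix_vector_mult_add_rdistrib matrix_vector_mul_assoc[symmetric]
    by (simp only: inner_add_right inner_matrix_vector_transpose transpose_transpose)
  then show ?thesis using assms by (simp add: inner_commute)
qed

lemma transpose_add_matrix: "transpose (M + N) = transpose M + transpose N"
  by (simp add: transpose_def vec_eq_iff)

lemma transpose_diff_matrix: "transpose (M - N) = transpose M - transpose N"
  by (simp add: transpose_def vec_eq_iff)

lemma transpose_uminus_matrix: "transpose (- M) = - transpose M"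
  by (simp add: transpose_def vec_eq_iff)

lemma pos_def_iff_neg_def_uminus: "pos_def M \<longleftrightarrow> neg_def (- M)"
  by (auto simp: pos_def_iff_qform neg_def_iff_qform transpose_uminus_matrix qform_uminus)

subsection \<open>Finsler's lemma\<close>

lemma compact_Finsler:
  fixes q g :: "'a::topological_space \<Rightarrow> real"
  assumes "compact K" and "continuous_on UNIV q" and "continuous_on UNIV g"
    and g_nonneg: "\<forall>x\<in>K. 0 \<le> g x" and q_neg: "\<forall>x\<in>K. g x = 0 \<longrightarrow> q x < 0"
  shows "\<exists>k\<ge>0. \<forall>x\<in>K. q x - k * g x < 0"
proof -
  define K' where "K' = K \<inter> {x. 0 \<le> q x}"
  have "compact K'"
    unfolding K'_def using assms(1,2) by (intro compact_Int_closed closed_Collect_le continuous_intros)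
  show ?thesis
  proof (cases "K' = {}")
    case True
    then have "\<forall>x\<in>K. q x - 0 * g x < 0" unfolding K'_def by auto
    then show ?thesis by blast
  next
    case False
    obtain m where m: "m \<in> K'" "\<forall>y\<in>K'. g m \<le> g y"
      using continuous_attains_inf[OF \<open>compact K'\<close> False] assms(3) continuous_on_subset by blast
    obtain M where M: "M \<in> K'" "\<forall>y\<in>K'. q y \<le> q M"
      using continuous_attains_sup[OF \<open>compact K'\<close> False] assms(2) continuous_on_subset by blast
    have "0 \<le> q M" using M(1) unfolding K'_def by auto
    have "0 < g m"
      using m(1) g_nonneg q_neg unfolding K'_def by (metis IntD1 IntD2 le_less mem_Collect_eq not_le)
    define k where "k = q M / g m + 1"
    have "k \<ge> 0" unfolding k_def using \<open>0 \<le> q M\<close> \<open>0 < g m\<close> by simp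
    have "q x - k * g x < 0" if "x \<in> K" for x
    proof (cases "x \<in> K'")
      case True
      \<comment> \<open>On K' the bound k g x \<ge> k g m = q M + g m beats q x \<le> q M.\<close>
      have "k * g m \<le> k * g x" using m(2) True \<open>k \<ge> 0\<close> by (simp add: mult_left_mono)
      moreover have "k * g m = q M + g m" unfolding k_def using \<open>0 < g m\<close> by (simp add: field_simps)
      ultimately show ?thesis using M(2) True \<open>0 < g m\<close> by fastforce
    next
      case False
      then have "q x < 0" using that unfolding K'_def by auto
      moreover have "0 \<le> k * g x" using \<open>k \<ge> 0\<close> g_nonneg that by simp
      ultimately show ?thesis by linarith
    qed
    then show ?thesis using \<open>k \<ge> 0\<close> by blast
  qed
qed

lemma Finsler_qform:
  assumes R_nonneg: "\<forall>x. 0 \<le> qform R x"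
  shows "(\<exists>k\<ge>0. \<forall>x. x \<noteq> 0 \<longrightarrow> qform (Q - k *\<^sub>R R) x < 0) \<longleftrightarrow>
         (\<forall>x. x \<noteq> 0 \<and> qform R x = 0 \<longrightarrow> qform Q x < 0)"
proof
  assume "\<exists>k\<ge>0. \<forall>x. x \<noteq> 0 \<longrightarrow> qform (Q - k *\<^sub>R R) x < 0"
  then show "\<forall>x. x \<noteq> 0 \<and> qform R x = 0 \<longrightarrow> qform Q x < 0"
    by (auto simp: qform_diff qform_scaleR_matrix)
next
  assume "\<forall>x. x \<noteq> 0 \<and> qform R x = 0 \<longrightarrow> qform Q x < 0"
  then have "\<forall>u\<in>sphere 0 1. qform R u = 0 \<longrightarrow> qform Q u < 0" by (metis mem_sphere_0 norm_zero zero_neq_one)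
  then obtain k where "k \<ge> 0" and sphere: "\<forall>u\<in>sphere 0 1. qform Q u - k * qform R u < 0"
    using compact_Finsler[OF compact_sphere continuous_on_qform continuous_on_qform] R_nonneg
    by blast
  have "qform (Q - k *\<^sub>R R) x < 0" if "x \<noteq> 0" for x
  proof -
    define u where "u = inverse (norm x) *\<^sub>R x"
    have "u \<in> sphere 0 1" using that unfolding u_def by simp
    have "x = norm x *\<^sub>R u" using that unfolding u_def by simp
    then have "qform (Q - k *\<^sub>R R) x = (norm x)\<^sup>2 * qform (Q - k *\<^sub>R R) u"
      by (metis qform_scaleR_vector)
    also have "\<dots> < 0"
      using sphere \<open>u \<in> sphere 0 1\<close> that
      by (simp add: qform_diff qform_scaleR_matrix mult_pos_neg)
    finally show ?thesis .
  qed
  then show "\<exists>k\<ge>0. \<forall>x. x \<noteq> 0 \<longrightarrow> qform (Q - k *\<^sub>R R) x < 0" using \<open>k \<ge> 0\<close> by blast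
qed

lemma neg_def_Finsler:
  assumes "transpose Q = Q" "transpose R = R" "\<forall>x. 0 \<le> qform R x"
  shows "(\<exists>k\<ge>0. neg_def (Q - k *\<^sub>R R)) \<longleftrightarrow> (\<forall>x. x \<noteq> 0 \<and> qform R x = 0 \<longrightarrow> qform Q x < 0)"
  using Finsler_qform[OF assms(3)] assms(1,2)
  by (simp add: neg_def_iff_qform transpose_diff_matrix transpose_scalar)

lemma pos_def_Finsler:
  assumes "transpose P = P" "transpose R = R" "\<forall>x. 0 \<le> qform R x"
  shows "(\<exists>k\<ge>0. pos_def (P + k *\<^sub>R R)) \<longleftrightarrow> (\<forall>x. x \<noteq> 0 \<and> qform R x = 0 \<longrightarrow> 0 < qform P x)"
proof -
  have "pos_def (P + k *\<^sub>R R) \<longleftrightarrow> neg_def (- P - k *\<^sub>R R)" for k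
    by (simp add: pos_def_iff_neg_def_uminus)
  moreover have "transpose (- P) = - P" using assms(1) by (simp add: transpose_uminus_matrix)
  ultimately show ?thesis using neg_def_Finsler[of "- P" R] assms(2,3) by (simp add: qform_uminus)
qed

lemma lyapunov_matrix_iff_qform:
  fixes E A :: "real^'n^'n"
  assumes "transpose P = P"
  defines "N \<equiv> AinvE E A"
  shows "lyapunov_matrix E A P \<longleftrightarrow>
    (\<forall>x\<in>consistency_space E A. x \<noteq> 0 \<longrightarrow> 0 < qform P x) \<and>
    (\<forall>y\<in>consistency_space E A. y \<noteq> 0 \<longrightarrow> qform (P ** N + transpose N ** P) y < 0)"
proof -
  let ?S = "consistency_space E A"
  have "(\<forall>x\<in>?S. x \<noteq> 0 \<longrightarrow> 2 * (x \<bullet> (P *v Atilde E A x)) < 0) \<longleftrightarrow>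
        (\<forall>y\<in>?S. y \<noteq> 0 \<longrightarrow> 2 * ((N *v y) \<bullet> (P *v y)) < 0)"
  proof (intro iffI ballI impI)
    fix y assume H: "\<forall>x\<in>?S. x \<noteq> 0 \<longrightarrow> 2 * (x \<bullet> (P *v Atilde E A x)) < 0"
      and y: "y \<in> ?S" "y \<noteq> 0"
    have "N *v y \<in> ?S" using AinvE_image_consistency_space y(1) unfolding N_def by blast
    moreover have "N *v y \<noteq> 0"
      using inj_on_AinvE_consistency_space y subspace_0[OF subspace_consistency_space]
      unfolding N_def by (metis inj_onD matrix_vector_mult_0_right)
    ultimately show "2 * ((N *v y) \<bullet> (P *v y)) < 0"
      using H Atilde_AinvE[OF y(1)] unfolding N_def by metis
  next
    fix x assume H: "\<forall>y\<in>?S. y \<noteq> 0 \<longrightarrow> 2 * ((N *v y) \<bullet> (P *v y)) < 0"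
      and x: "x \<in> ?S" "x \<noteq> 0"
    then show "2 * (x \<bullet> (P *v Atilde E A x)) < 0"
      using Atilde_in_consistency_space[OF x(1)] AinvE_Atilde[OF x(1)] unfolding N_def by force
  qed
  then show ?thesis
    unfolding lyapunov_matrix_def qform_symmetrized_product[OF assms(1)]
    using assms(1) by (simp add: qform_def)
qed

theorem lemma2:
  fixes E A P :: "real^'n^'n" and C :: "real^'n^'m"
  assumes "invertible A"
    and "\<forall>x. x \<in> consistency_space E A \<longleftrightarrow> C *v x = 0"
    and "transpose P = P"
  shows "lyapunov_matrix E A P \<longleftrightarrow>
    (\<exists>\<kappa>1 \<kappa>2 :: real. \<kappa>1 \<ge> 0 \<and> \<kappa>2 \<ge> 0 \<and>
       pos_def (P + \<kappa>1 *\<^sub>R (transpose C ** C)) \<and>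
       neg_def (P ** matrix_inv A ** E + transpose E ** transpose (matrix_inv A) ** P
                - \<kappa>2 *\<^sub>R (transpose C ** C)))"
proof -
  define N where "N = AinvE E A"
  define R where "R = transpose C ** C"
  define Q where "Q = P ** N + transpose N ** P"
  have Q_eq: "P ** matrix_inv A ** E + transpose E ** transpose (matrix_inv A) ** P = Q"
    unfolding Q_def N_def AinvE_def by (simp add: matrix_mul_assoc matrix_transpose_mul)
  have "transpose Q = Q"
    unfolding Q_def using assms(3)
    by (simp add: transpose_add_matrix matrix_transpose_mul matrix_mul_assoc add.commute)
  moreover have "transpose R = R" unfolding R_def by (simp add: matrix_transpose_mul)
  moreover have "\<forall>x. 0 \<le> qform R x" unfolding R_def qform_transpose_mult_self by simp
  moreover have "x \<in> consistency_space E A \<longleftrightarrow> qform R x = 0" for x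
    using assms(2) unfolding R_def qform_transpose_mult_self by simp
  then have "lyapunov_matrix E A P \<longleftrightarrow>
      (\<forall>x. x \<noteq> 0 \<and> qform R x = 0 \<longrightarrow> 0 < qform P x) \<and>
      (\<forall>x. x \<noteq> 0 \<and> qform R x = 0 \<longrightarrow> qform Q x < 0)"
    unfolding lyapunov_matrix_iff_qform[OF assms(3)] N_def[symmetric] Q_def[symmetric] by blast
  ultimately show ?thesis
    unfolding Q_eq R_def[symmetric]
    using pos_def_Finsler[OF assms(3)] neg_def_Finsler[of Q R] by blast
qed

end
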